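(* Let $\{e_1,e_2,e_3\}$ be the standard basis of $\mathbb{R}^3$, let $\eta\in(0,\pi)$, $l>0$, and set $x_1=0$, $x_2=e_1$, $x_4=l(\cos\eta\,e_1+\sin\eta\,e_2)$, $x_3=x_2+x_4-x_1$. For $\lambda_1,\lambda_2\in(0,1)$ let $x_0=x_1+\lambda_1(x_2-x_1)+\lambda_2(x_4-x_1)$. Then the (Kawasaki) condition $\angle x_1x_0x_4+\angle x_2x_0x_3=\pi$ holds if and only if $$(\lambda_2-1)\lambda_2\, l^2-(\lambda_1-1)\lambda_1=0 .$$
   Context: $\angle abc\in[0,\pi]$ denotes the (unsigned) angle at the vertex $b$ between the segments $ba$ and $bc$, i.e. $\arccos\big(\frac{(a-b)\cdot(c-b)}{|a-b||c-b|}\big)$. The point $x_0$ lies in the interior of the parallelogram with corners $x_1,x_2,x_3,x_4$. *)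

theory Defs
  imports "HOL-Analysis.Analysis"
begin

definition vertex_angle :: "real^3 \<Rightarrow> real^3 \<Rightarrow> real^3 \<Rightarrow> real" where
  "vertex_angle a b c = arccos (((a - b) \<bullet> (c - b)) / (norm (a - b) * norm (c - b)))"

end

theory Submission
  imports Defs
begin

text \<open>
  Both angles lie strictly between 0 and \<pi>, since the edge vectors at \<open>x\<^sub>0\<close> are not
  parallel; so their sum is \<pi> exactly when the sine of the sum vanishes. Multiplied by the four
  edge lengths, \<open>sin (\<theta> + \<theta>')\<close> becomes \<open>\<bar>u \<times> v\<bar> (u' \<bullet> v') + (u \<bullet> v) \<bar>u' \<times> v'\<bar>\<close>.
  In the parallelogram the two cross products are \<open>\<lambda>\<^sub>1\<close> and \<open>1 - \<lambda>\<^sub>1\<close> times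
  \<open>x\<^sub>2 \<times> x\<^sub>4\<close>, and the resulting combination of dot products equals
  \<open>\<lambda>\<^sub>1 (1 - \<lambda>\<^sub>1) - \<lambda>\<^sub>2 (1 - \<lambda>\<^sub>2) l\<^sup>2\<close>, in which \<open>\<eta>\<close> cancels.
\<close>

unbundle cross3_syntax

lemma vertex_angle_cos_bounds:
  "- 1 \<le> ((a - b) \<bullet> (c - b)) / (norm (a - b) * norm (c - b))"
  "((a - b) \<bullet> (c - b)) / (norm (a - b) * norm (c - b)) \<le> 1"
proof -
  have "\<bar>((a - b) \<bullet> (c - b)) / (norm (a - b) * norm (c - b))\<bar> \<le> 1"
    using Cauchy_Schwarz_ineq2[of "a - b" "c - b"]
    by (cases "a = b \<or> c = b") (auto simp: abs_divide abs_mult divide_le_eq_1)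
  then show "- 1 \<le> ((a - b) \<bullet> (c - b)) / (norm (a - b) * norm (c - b))"
    "((a - b) \<bullet> (c - b)) / (norm (a - b) * norm (c - b)) \<le> 1"
    unfolding abs_le_iff by linarith+
qed

lemma vertex_angle_nonneg: "0 \<le> vertex_angle a b c"
  and vertex_angle_le_pi: "vertex_angle a b c \<le> pi"
  using vertex_angle_cos_bounds[of a b c]
  by (simp_all add: vertex_angle_def arccos_lbound arccos_ubound)

lemma norm_mult_cos_vertex_angle:
  "norm (a - b) * norm (c - b) * cos (vertex_angle a b c) = (a - b) \<bullet> (c - b)"
  using vertex_angle_cos_bounds[of a b c]
  by (auto simp: vertex_angle_def)

lemma norm_mult_sin_vertex_angle:
  "norm (a - b) * norm (c - b) * sin (vertex_angle a b c) = norm ((a - b) \<times> (c - b))"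
proof (rule power2_eq_imp_eq)
  have "(norm (a - b) * norm (c - b) * sin (vertex_angle a b c))\<^sup>2
      = (norm (a - b) * norm (c - b))\<^sup>2 - (norm (a - b) * norm (c - b) * cos (vertex_angle a b c))\<^sup>2"
    by (simp add: sin_squared_eq power_mult_distrib algebra_simps)
  also have "\<dots> = (norm ((a - b) \<times> (c - b)))\<^sup>2"
    using norm_cross_dot[of "a - b" "c - b"] by (simp add: norm_mult_cos_vertex_angle)
  finally show "(norm (a - b) * norm (c - b) * sin (vertex_angle a b c))\<^sup>2
      = (norm ((a - b) \<times> (c - b)))\<^sup>2" .
  show "0 \<le> norm (a - b) * norm (c - b) * sin (vertex_angle a b c)"
    by (simp add: sin_ge_zero vertex_angle_nonneg vertex_angle_le_pi)
qed simp

lemma vertex_angle_gt_0: "(a - b) \<times> (c - b) \<noteq> 0 \<Longrightarrow> 0 < vertex_angle a b c"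
  and vertex_angle_lt_pi: "(a - b) \<times> (c - b) \<noteq> 0 \<Longrightarrow> vertex_angle a b c < pi"
  using norm_mult_sin_vertex_angle[of a b c] vertex_angle_nonneg[of a b c] vertex_angle_le_pi[of a b c]
  by (auto simp: order.order_iff_strict)

lemma add_eq_pi_iff_sin_add_eq_0:
  fixes x y :: real
  assumes "0 < x" "x < pi" "0 < y" "y < pi"
  shows "x + y = pi \<longleftrightarrow> sin (x + y) = 0"
proof -
  have "sin (x + y) = - sin (x + y - pi)"
    by (simp add: sin_diff)
  moreover have "\<bar>x + y - pi\<bar> < pi"
    using assms by linarith
  ultimately show ?thesis
    using sin_zero_pi_iff by fastforce
qed

lemma vertex_angle_add_eq_pi_iff:
  assumes "(a - b) \<times> (c - b) \<noteq> 0" "(a' - b') \<times> (c' - b') \<noteq> 0"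
  shows "vertex_angle a b c + vertex_angle a' b' c' = pi \<longleftrightarrow>
    norm ((a - b) \<times> (c - b)) * ((a' - b') \<bullet> (c' - b'))
      + ((a - b) \<bullet> (c - b)) * norm ((a' - b') \<times> (c' - b')) = 0"
proof -
  define N where "N = norm (a - b) * norm (c - b)"
  define N' where "N' = norm (a' - b') * norm (c' - b')"
  have "a \<noteq> b" "c \<noteq> b" "a' \<noteq> b'" "c' \<noteq> b'"
    using assms by auto
  then have "N > 0" "N' > 0"
    by (simp_all add: N_def N'_def)
  have "N * N' * sin (vertex_angle a b c + vertex_angle a' b' c') =
    norm ((a - b) \<times> (c - b)) * ((a' - b') \<bullet> (c' - b'))
      + ((a - b) \<bullet> (c - b)) * norm ((a' - b') \<times> (c' - b'))"
    unfolding sin_add N_def N'_def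
      norm_mult_sin_vertex_angle[symmetric] norm_mult_cos_vertex_angle[symmetric]
    by (simp add: algebra_simps)
  with \<open>N > 0\<close> \<open>N' > 0\<close> show ?thesis
    using add_eq_pi_iff_sin_add_eq_0 vertex_angle_gt_0 vertex_angle_lt_pi assms
    by (metis mult_eq_0_iff order.irrefl)
qed

theorem mainTheorem1:
  fixes eta l lam1 lam2 :: real and x0 x1 x2 x3 x4 :: "real^3"
  assumes "0 < eta" "eta < pi" "l > 0"
    and "0 < lam1" "lam1 < 1" "0 < lam2" "lam2 < 1"
    and "x1 = 0" "x2 = axis 1 1"
    and "x4 = l *\<^sub>R (cos eta *\<^sub>R axis 1 1 + sin eta *\<^sub>R axis 2 1)"
    and "x3 = x2 + x4 - x1"
    and "x0 = x1 + lam1 *\<^sub>R (x2 - x1) + lam2 *\<^sub>R (x4 - x1)"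
  shows "vertex_angle x1 x0 x4 + vertex_angle x2 x0 x3 = pi \<longleftrightarrow>
         (lam2 - 1) * lam2 * l\<^sup>2 - (lam1 - 1) * lam1 = 0"
proof -
  define S where "S = l * sin eta"
  have "S > 0"
    using assms(1-3) by (simp add: S_def sin_gt_zero)
  have cross14: "(x1 - x0) \<times> (x4 - x0) = (- lam1 * S) *\<^sub>R axis 3 1"
    using assms(8-12) by (simp add: S_def cross3_simps axis_def forall_3)
  have cross23: "(x2 - x0) \<times> (x3 - x0) = ((1 - lam1) * S) *\<^sub>R axis 3 1"
    using assms(8-12) by (simp add: S_def cross3_simps axis_def forall_3)
  define d14 where "d14 = (x1 - x0) \<bullet> (x4 - x0)"
  define d23 where "d23 = (x2 - x0) \<bullet> (x3 - x0)"
  have dots: "lam1 * d23 + (1 - lam1) * d14 = (lam2 - 1) * lam2 * l\<^sup>2 - (lam1 - 1) * lam1"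
  proof -
    have "l\<^sup>2 = (l * cos eta)\<^sup>2 + (l * sin eta)\<^sup>2"
      by (simp add: power_mult_distrib flip: distrib_left)
    then show ?thesis
      using assms(8-12)
      by (simp add: d14_def d23_def inner_vec_def sum_3 axis_def algebra_simps power2_eq_square)
  qed
  have norms: "norm ((x1 - x0) \<times> (x4 - x0)) = lam1 * S"
    "norm ((x2 - x0) \<times> (x3 - x0)) = (1 - lam1) * S"
    using \<open>S > 0\<close> assms(4,5) by (simp_all add: cross14 cross23 abs_mult)
  then have "(x1 - x0) \<times> (x4 - x0) \<noteq> 0" "(x2 - x0) \<times> (x3 - x0) \<noteq> 0"
    using \<open>S > 0\<close> assms(4,5) by auto
  then have "vertex_angle x1 x0 x4 + vertex_angle x2 x0 x3 = pi \<longleftrightarrow>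
      norm ((x1 - x0) \<times> (x4 - x0)) * d23 + d14 * norm ((x2 - x0) \<times> (x3 - x0)) = 0"
    unfolding d14_def d23_def by (rule vertex_angle_add_eq_pi_iff)
  also have "\<dots> \<longleftrightarrow> S * (lam1 * d23 + (1 - lam1) * d14) = 0"
    unfolding norms by (simp add: algebra_simps)
  finally show ?thesis
    using \<open>S > 0\<close> dots by simp
qed

end
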